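(* Let $\phi=\langle X,Q,D,C\rangle$ be a QCSP, let $x_i\in X$ be an existential variable ($Q_{x_i}=\exists$), and let $a\in D_{x_i}$ be such that $\textsl{s-fixable}^\phi(x_i,a)$ holds. Let $\phi'=\langle X,Q,D',C\rangle$ where $D'_{x_i}=\{a\}$ and $D'_{x_j}=D_{x_j}$ for all $j\ne i$. Then $\phi$ is true iff $\phi'$ is true.
   Context: Fix a finite set $\mathbb{D}$. For a finite set $V$ of variables, a $V$-tuple is a map $t:V\to\mathbb{D}$, written $x\mapsto t_x$; a $V$-relation is a set of $V$-tuples. A QCSP is a tuple $\phi=\langle X,Q,D,C\rangle$ where $X=\{x_1,\dots,x_n\}$ is a finite set of variables linearly ordered by index, $Q$ assigns to each $x_i$ a quantifier $Q_{x_i}\in\{\forall,\exists\}$, $D$ assigns to each $x_i$ a domain $D_{x_i}\subseteq\mathbb{D}$, and $C$ is a finite set of constraints, each being a $V$-relation for some $V\subseteq X$. For $V\subseteq X$, $\prod_{x\in V}D_x$ denotes the set of $V$-tuples $t$ with $t_x\in D_x$ for all $x\in V$; for $U\subseteq V$ and a $V$-tuple $t$, $t|_U$ is its restriction to $U$. Let $E=\{x_i:Q_{x_i}=\exists\}$, $A=\{x_i:Q_{x_i}=\forall\}$, $X_j=\{x_i:i\le j\}$ (so $X_0=\emptyset$), $A_j=A\cap X_j$. The set of solutions $\mathrm{sol}^\phi$ is the set of $t\in\prod_{x\in X}D_x$ such that $t|_V\in c$ for every $V$-relation $c\in C$. The QCSP $\phi$ is true if the sentence $Q_{x_1}x_1\in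 D_{x_1}\cdots Q_{x_n}x_n\in D_{x_n}.\ \bigwedge_{c\in C}c(\ldots)$ holds, with bounded quantifiers ranging over the listed domains and each constraint atom for a $V$-relation $c$ holding under assignment $t$ iff $t|_V\in c$. A strategy is a family $s=(s_{x_i})_{x_i\in E}$ of functions $s_{x_i}:\prod_{y\in A_{i-1}}D_y\to D_{x_i}$; its scenarios $\mathrm{sce}^\phi(s)$ are the $t\in\prod_{x\in X}D_x$ with $t_{x_i}=s_{x_i}(t|_{A_{i-1}})$ for every $x_i\in E$; $s$ is winning if $\mathrm{sce}^\phi(s)\subseteq\mathrm{sol}^\phi$; the set of outcomes is $\mathrm{out}^\phi=\bigcup_{s\text{ winning}}\mathrm{sce}^\phi(s)$. Shallow fixability: $\textsl{s-fixable}^\phi(x_i,a)$ iff $\forall t\in\mathrm{out}^\phi.\ \exists t'\in\mathrm{out}^\phi.\ t|_{X_{i-1}}=t'|_{X_{i-1}}\wedge t'_{x_i}=a$. *)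

theory Defs
  imports Main
begin

text \<open>Quantifier-variables are x_1..x_n, represented by the naturals 1..n.
  The finite value set is the finite type 'd.  A V-tuple is a partial map
  with domain exactly V.  A constraint is a pair (V, c) of its scope V and a
  V-relation c.\<close>

datatype quantifier = QAll | QEx

record 'd qcsp =
  nvars :: nat
  quant :: "nat \<Rightarrow> quantifier"
  doms  :: "nat \<Rightarrow> 'd set"
  cons  :: "(nat set \<times> (nat \<rightharpoonup> 'd) set) set"

definition vars :: "'d qcsp \<Rightarrow> nat set" where
  "vars \<phi> = {1..nvars \<phi>}"

definition evars :: "'d qcsp \<Rightarrow> nat set" where
  "evars \<phi> = {x \<in> vars \<phi>. quant \<phi> x = QEx}"

definition avars :: "'d qcsp \<Rightarrow> nat set" where
  "avars \<phi> = {x \<in> vars \<phi>. quant \<phi> x = QAll}"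

definition prefix_vars :: "'d qcsp \<Rightarrow> nat \<Rightarrow> nat set" where
  "prefix_vars \<phi> j = {x \<in> vars \<phi>. x \<le> j}"

definition prefix_avars :: "'d qcsp \<Rightarrow> nat \<Rightarrow> nat set" where
  "prefix_avars \<phi> j = avars \<phi> \<inter> prefix_vars \<phi> j"

definition tuples :: "nat set \<Rightarrow> (nat \<Rightarrow> 'd set) \<Rightarrow> (nat \<rightharpoonup> 'd) set" where
  "tuples V D = {t. dom t = V \<and> (\<forall>x\<in>V. the (t x) \<in> D x)}"

definition wf_qcsp :: "'d qcsp \<Rightarrow> bool" where
  "wf_qcsp \<phi> \<longleftrightarrow> finite (cons \<phi>) \<and>
     (\<forall>(V, c) \<in> cons \<phi>. V \<subseteq> vars \<phi> \<and> (\<forall>t\<in>c. dom t = V))"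

definition satisfies :: "'d qcsp \<Rightarrow> (nat \<rightharpoonup> 'd) \<Rightarrow> bool" where
  "satisfies \<phi> t \<longleftrightarrow> (\<forall>(V, c) \<in> cons \<phi>. t |` V \<in> c)"

definition sol :: "'d qcsp \<Rightarrow> (nat \<rightharpoonup> 'd) set" where
  "sol \<phi> = {t \<in> tuples (vars \<phi>) (doms \<phi>). satisfies \<phi> t}"

text \<open>Truth of the quantified sentence: qeval \<phi> m t evaluates the sentence
  with the last m quantifiers still to be processed (variable
  n - m + 1 is the next one), under the partial assignment t.\<close>
primrec qeval :: "'d qcsp \<Rightarrow> nat \<Rightarrow> (nat \<rightharpoonup> 'd) \<Rightarrow> bool" where
  "qeval \<phi> 0 t = satisfies \<phi> t"
| "qeval \<phi> (Suc m) t =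
     (let i = Suc (nvars \<phi> - Suc m) in
      if quant \<phi> i = QEx
      then (\<exists>a \<in> doms \<phi> i. qeval \<phi> m (t(i \<mapsto> a)))
      else (\<forall>a \<in> doms \<phi> i. qeval \<phi> m (t(i \<mapsto> a))))"

definition qtrue :: "'d qcsp \<Rightarrow> bool" where
  "qtrue \<phi> = qeval \<phi> (nvars \<phi>) Map.empty"

text \<open>A strategy: for every existential x_i, a function from
  \<Prod>_{y\<in>A_{i-1}} D_y to D_{x_i} (values outside that product are irrelevant).\<close>
definition strategy :: "'d qcsp \<Rightarrow> (nat \<Rightarrow> (nat \<rightharpoonup> 'd) \<Rightarrow> 'd) \<Rightarrow> bool" where
  "strategy \<phi> s \<longleftrightarrow> (\<forall>x \<in> evars \<phi>.
      \<forall>u \<in> tuples (prefix_avars \<phi> (x - 1)) (doms \<phi>). s x u \<in> doms \<phi> x)"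

definition sce :: "'d qcsp \<Rightarrow> (nat \<Rightarrow> (nat \<rightharpoonup> 'd) \<Rightarrow> 'd) \<Rightarrow> (nat \<rightharpoonup> 'd) set" where
  "sce \<phi> s = {t \<in> tuples (vars \<phi>) (doms \<phi>).
      \<forall>x \<in> evars \<phi>. t x = Some (s x (t |` prefix_avars \<phi> (x - 1)))}"

definition winning :: "'d qcsp \<Rightarrow> (nat \<Rightarrow> (nat \<rightharpoonup> 'd) \<Rightarrow> 'd) \<Rightarrow> bool" where
  "winning \<phi> s \<longleftrightarrow> strategy \<phi> s \<and> sce \<phi> s \<subseteq> sol \<phi>"

definition out :: "'d qcsp \<Rightarrow> (nat \<rightharpoonup> 'd) set" where
  "out \<phi> = \<Union> {sce \<phi> s | s. winning \<phi> s}"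

definition s_fixable :: "'d qcsp \<Rightarrow> nat \<Rightarrow> 'd \<Rightarrow> bool" where
  "s_fixable \<phi> i a \<longleftrightarrow> (\<forall>t \<in> out \<phi>. \<exists>t' \<in> out \<phi>.
      t |` prefix_vars \<phi> (i - 1) = t' |` prefix_vars \<phi> (i - 1) \<and> t' i = Some a)"

end

theory Submission
  imports Defs
begin

(* Read the QCSP as a two-player game in which the variables
   x_1, ..., x_n are assigned in order; a position is a tuple on {1..k}, and
   it is "good" when the remaining quantified sentence is true there.
   Fixing x_i to a can only make the sentence harder to satisfy, so truth of
   the restricted problem implies truth of the original one (domain
   monotonicity).  Conversely, if the original problem is true and all
   domains are nonempty, a winning strategy exists, built by always moving
   to a good position; every prefix of one of its scenarios is good.  Good
   positions propagate backwards along the scenarios of a winning strategy,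
   both for the original problem and for the restricted one, as long as the
   variables involved keep their domains.  It therefore suffices to see that
   every outcome prefix on X_{i-1} is good in the restricted problem, and
   this is what shallow fixability provides: such a prefix extends to an
   outcome taking value a at x_i.  Problems with an empty domain are settled
   separately: their truth is decided by the quantifier of the first empty
   domain, which fixing x_i does not change. *)

section \<open>Game positions\<close>

definition good :: "'d qcsp \<Rightarrow> nat \<Rightarrow> (nat \<rightharpoonup> 'd) \<Rightarrow> bool" where
  "good \<phi> k q = qeval \<phi> (nvars \<phi> - k) q"

lemma good_step:
  assumes "k < nvars \<phi>"
  shows "good \<phi> k q = (if quant \<phi> (Suc k) = QEx
     then (\<exists>b\<in>doms \<phi> (Suc k). good \<phi> (Suc k) (q(Suc k \<mapsto> b)))
     else (\<forall>b\<in>doms \<phi> (Suc k). good \<phi> (Suc k) (q(Suc k \<mapsto> b))))"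
proof -
  have m: "nvars \<phi> - k = Suc (nvars \<phi> - Suc k)" using assms by simp
  have l: "Suc (nvars \<phi> - Suc (nvars \<phi> - Suc k)) = Suc k" using assms by simp
  show ?thesis unfolding good_def m by (simp only: qeval.simps Let_def l)
qed

lemma qeval_mono:
  assumes nv: "nvars \<psi> = nvars \<phi>" and qq: "quant \<psi> = quant \<phi>" and cc: "cons \<psi> = cons \<phi>"
    and dom_ex: "\<And>l. nvars \<phi> - m < l \<Longrightarrow> quant \<phi> l = QEx \<Longrightarrow> doms \<psi> l \<subseteq> doms \<phi> l"
    and dom_all: "\<And>l. nvars \<phi> - m < l \<Longrightarrow> quant \<phi> l = QAll \<Longrightarrow> doms \<phi> l \<subseteq> doms \<psi> l"
    and "qeval \<psi> m q"
  shows "qeval \<phi> m q"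
  using assms(4-)
proof (induction m arbitrary: q)
  case 0
  then show ?case by (simp add: satisfies_def cc)
next
  case (Suc m)
  define l where "l = Suc (nvars \<phi> - Suc m)"
  have later: "nvars \<phi> - Suc m < l" if "nvars \<phi> - m < l" for l
    using that by linarith
  have IH: "qeval \<psi> m r \<Longrightarrow> qeval \<phi> m r" for r
    by (rule Suc.IH) (use Suc.prems(1,2) later in blast)+
  have l: "nvars \<phi> - Suc m < l" by (simp add: l_def)
  show ?case
    using Suc.prems(3) IH Suc.prems(1)[OF l] Suc.prems(2)[OF l]
    by (cases "quant \<phi> l") (auto simp: l_def nv qq Let_def)
qed

section \<open>Scenarios of a strategy\<close>

lemma restrict_map_full: "dom v = {1..n} \<Longrightarrow> v |` {1..n} = v"
  by (rule ext) (auto simp: restrict_map_def dom_def set_eq_iff)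

lemma restrict_map_Suc: "v (Suc k) = Some c \<Longrightarrow> (v |` {1..k})(Suc k \<mapsto> c) = v |` {1..Suc k}"
  by (rule ext) (auto simp: restrict_map_def)

definition scenario :: "'d qcsp \<Rightarrow> (nat \<Rightarrow> (nat \<rightharpoonup> 'd) \<Rightarrow> 'd) \<Rightarrow> (nat \<rightharpoonup> 'd) \<Rightarrow> (nat \<rightharpoonup> 'd)" where
  "scenario \<phi> s w = (\<lambda>l. if l \<in> vars \<phi> then (if quant \<phi> l = QAll then w l
     else Some (s l (w |` prefix_avars \<phi> (l - 1)))) else None)"

lemma scenario_restrict_avars:
  "scenario \<phi> s w |` prefix_avars \<phi> k = w |` prefix_avars \<phi> k"
  by (rule ext) (auto simp: scenario_def restrict_map_def prefix_avars_def avars_def)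

lemma scenario_in_sce:
  assumes st: "strategy \<phi> s"
    and w: "\<And>l. l \<in> vars \<phi> \<Longrightarrow> quant \<phi> l = QAll \<Longrightarrow> w l \<noteq> None \<and> the (w l) \<in> doms \<phi> l"
  shows "scenario \<phi> s w \<in> sce \<phi> s"
proof -
  have w_tuple: "w |` prefix_avars \<phi> (l - 1) \<in> tuples (prefix_avars \<phi> (l - 1)) (doms \<phi>)" for l
    using w by (auto simp: tuples_def prefix_avars_def avars_def)
  have "dom (scenario \<phi> s w) = vars \<phi>"
    using w by (auto simp: scenario_def split: if_splits)
  moreover have "the (scenario \<phi> s w x) \<in> doms \<phi> x" if x: "x \<in> vars \<phi>" for x
  proof (cases "quant \<phi> x")
    case QEx
    then have "x \<in> evars \<phi>" using x by (simp add: evars_def)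
    then show ?thesis using st w_tuple[of x] QEx x by (auto simp: strategy_def scenario_def)
  next
    case QAll
    then show ?thesis using w x by (auto simp: scenario_def)
  qed
  moreover have "scenario \<phi> s w x = Some (s x (scenario \<phi> s w |` prefix_avars \<phi> (x - 1)))"
    if "x \<in> evars \<phi>" for x
    using that unfolding scenario_restrict_avars by (simp add: evars_def scenario_def)
  ultimately show ?thesis by (simp add: sce_def tuples_def)
qed

lemma sce_deviate:
  assumes st: "strategy \<phi> s" and v: "v \<in> sce \<phi> s"
    and j: "Suc k \<in> vars \<phi>" "quant \<phi> (Suc k) = QAll" and b: "b \<in> doms \<phi> (Suc k)"
  shows "\<exists>v'\<in>sce \<phi> s. v' |` {1..Suc k} = (v |` {1..k})(Suc k \<mapsto> b)"
proof -
  define w where "w = v(Suc k \<mapsto> b)"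
  have vt: "v \<in> tuples (vars \<phi>) (doms \<phi>)"
    and ve: "\<forall>x\<in>evars \<phi>. v x = Some (s x (v |` prefix_avars \<phi> (x - 1)))"
    using v by (auto simp: sce_def)
  have "scenario \<phi> s w \<in> sce \<phi> s"
    by (rule scenario_in_sce[OF st]) (use vt b in \<open>auto simp: w_def tuples_def\<close>)
  moreover have "scenario \<phi> s w l = v l" if l: "l \<in> {1..k}" for l
  proof -
    have lv: "l \<in> vars \<phi>" using l j by (auto simp: vars_def)
    have "w |` prefix_avars \<phi> (l - 1) = v |` prefix_avars \<phi> (l - 1)"
      using l by (auto simp: w_def restrict_map_def prefix_avars_def prefix_vars_def intro!: ext)
    then show ?thesis
      using l lv ve by (cases "quant \<phi> l") (auto simp: scenario_def evars_def w_def)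
  qed
  moreover have "scenario \<phi> s w (Suc k) = Some b"
    using j by (simp add: scenario_def w_def)
  ultimately have "scenario \<phi> s w |` {1..Suc k} = (v |` {1..k})(Suc k \<mapsto> b)"
    by (auto simp: restrict_map_def intro!: ext)
  with \<open>scenario \<phi> s w \<in> sce \<phi> s\<close> show ?thesis by blast
qed

lemma sce_prefix_good_downward:
  assumes win: "winning \<phi> s"
    and nv: "nvars \<psi> = nvars \<phi>" and qq: "quant \<psi> = quant \<phi>"
    and dd: "\<And>l. l \<le> k0 \<Longrightarrow> doms \<psi> l = doms \<phi> l" and k0: "k0 \<le> nvars \<phi>"
    and k0_good: "\<And>v. v \<in> sce \<phi> s \<Longrightarrow> good \<psi> k0 (v |` {1..k0})"
    and "k \<le> k0"
  shows "\<forall>v\<in>sce \<phi> s. good \<psi> k (v |` {1..k})"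
  using \<open>k \<le> k0\<close>
proof (induction k rule: inc_induct)
  case base
  then show ?case using k0_good by blast
next
  case (step k)
  have kn: "k < nvars \<psi>" and j: "Suc k \<in> vars \<phi>" "doms \<psi> (Suc k) = doms \<phi> (Suc k)"
    using step.hyps k0 dd nv by (auto simp: vars_def)
  have st: "strategy \<phi> s" using win by (simp add: winning_def)
  show ?case
  proof
    fix v assume v: "v \<in> sce \<phi> s"
    show "good \<psi> k (v |` {1..k})"
    proof (cases "quant \<phi> (Suc k)")
      case QEx
      obtain c where c: "v (Suc k) = Some c" "c \<in> doms \<phi> (Suc k)"
        using v j(1) by (force simp: sce_def tuples_def)
      have "good \<psi> (Suc k) ((v |` {1..k})(Suc k \<mapsto> c))"
        using step.IH v restrict_map_Suc[of v k c] c(1) by simp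
      then show ?thesis using good_step[OF kn] QEx c(2) j(2) qq by auto
    next
      case QAll
      have "good \<psi> (Suc k) ((v |` {1..k})(Suc k \<mapsto> b))" if b: "b \<in> doms \<phi> (Suc k)" for b
        using sce_deviate[OF st v j(1) QAll b] step.IH by metis
      then show ?thesis using good_step[OF kn] QAll j(2) qq by auto
    qed
  qed
qed

lemma winning_prefix_good:
  assumes win: "winning \<phi> s" and v: "v \<in> sce \<phi> s" and k: "k \<le> nvars \<phi>"
  shows "good \<phi> k (v |` {1..k})"
proof -
  have "good \<phi> (nvars \<phi>) (v |` {1..nvars \<phi>})" if v: "v \<in> sce \<phi> s" for v
  proof -
    have "v \<in> sol \<phi>" using win v by (auto simp: winning_def)
    have "dom v = {1..nvars \<phi>}" using v by (simp add: sce_def tuples_def vars_def)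
    then have "v |` {1..nvars \<phi>} = v" by (rule restrict_map_full)
    with \<open>v \<in> sol \<phi>\<close> show ?thesis by (simp add: good_def sol_def)
  qed
  then show ?thesis using sce_prefix_good_downward[OF win refl refl _ order_refl] k v by blast
qed

section \<open>A true problem has a winning strategy\<close>

definition choice :: "'d qcsp \<Rightarrow> (nat \<rightharpoonup> 'd) \<Rightarrow> nat \<Rightarrow> 'd" where
  "choice \<phi> p j = (SOME b. b \<in> doms \<phi> j \<and>
     (good \<phi> j (p(j \<mapsto> b)) \<or> (\<forall>b'\<in>doms \<phi> j. \<not> good \<phi> j (p(j \<mapsto> b')))))"

lemma choice_dom: "doms \<phi> j \<noteq> {} \<Longrightarrow> choice \<phi> p j \<in> doms \<phi> j"
  unfolding choice_def by (rule someI2_ex) auto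

lemma choice_good: "\<exists>b\<in>doms \<phi> j. good \<phi> j (p(j \<mapsto> b)) \<Longrightarrow> good \<phi> j (p(j \<mapsto> choice \<phi> p j))"
  unfolding choice_def by (rule someI2_ex) blast+

primrec play :: "'d qcsp \<Rightarrow> (nat \<rightharpoonup> 'd) \<Rightarrow> nat \<Rightarrow> (nat \<rightharpoonup> 'd)" where
  "play \<phi> u 0 = Map.empty"
| "play \<phi> u (Suc k) = (play \<phi> u k)(Suc k \<mapsto> (if quant \<phi> (Suc k) = QAll
      then the (u (Suc k)) else choice \<phi> (play \<phi> u k) (Suc k)))"

lemma play_Suc_All:
  "quant \<phi> (Suc k) = QAll \<Longrightarrow> play \<phi> u (Suc k) = (play \<phi> u k)(Suc k \<mapsto> the (u (Suc k)))"
  by simp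

lemma play_Suc_Ex:
  "quant \<phi> (Suc k) = QEx \<Longrightarrow>
     play \<phi> u (Suc k) = (play \<phi> u k)(Suc k \<mapsto> choice \<phi> (play \<phi> u k) (Suc k))"
  by simp

declare play.simps(2) [simp del]

definition play_strategy :: "'d qcsp \<Rightarrow> nat \<Rightarrow> (nat \<rightharpoonup> 'd) \<Rightarrow> 'd" where
  "play_strategy \<phi> x u = the (play \<phi> u x x)"

lemma play_cong:
  "(\<And>l. 0 < l \<Longrightarrow> l \<le> k \<Longrightarrow> quant \<phi> l = QAll \<Longrightarrow> u l = u' l) \<Longrightarrow> play \<phi> u k = play \<phi> u' k"
  by (induction k) (auto simp: play.simps(2))

lemma play_good:
  assumes qt: "qtrue \<phi>"
    and u: "\<And>l. l \<in> vars \<phi> \<Longrightarrow> quant \<phi> l = QAll \<Longrightarrow> the (u l) \<in> doms \<phi> l"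
    and "k \<le> nvars \<phi>"
  shows "good \<phi> k (play \<phi> u k)"
  using \<open>k \<le> nvars \<phi>\<close>
proof (induction k)
  case 0
  then show ?case using qt by (simp add: good_def qtrue_def)
next
  case (Suc k)
  then have kn: "k < nvars \<phi>" and g: "good \<phi> k (play \<phi> u k)" by simp_all
  show ?case
  proof (cases "quant \<phi> (Suc k)")
    case QEx
    then have "\<exists>b\<in>doms \<phi> (Suc k). good \<phi> (Suc k) ((play \<phi> u k)(Suc k \<mapsto> b))"
      using g good_step[OF kn] by simp
    then show ?thesis unfolding play_Suc_Ex[OF QEx] by (rule choice_good)
  next
    case QAll
    have "the (u (Suc k)) \<in> doms \<phi> (Suc k)" using QAll u kn by (simp add: vars_def)
    moreover have "\<forall>b\<in>doms \<phi> (Suc k). good \<phi> (Suc k) ((play \<phi> u k)(Suc k \<mapsto> b))"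
      using g good_step[OF kn] QAll by simp
    ultimately show ?thesis unfolding play_Suc_All[OF QAll] by blast
  qed
qed

lemma play_strategy_winning:
  assumes qt: "qtrue \<phi>" and ne: "\<And>j. j \<in> vars \<phi> \<Longrightarrow> doms \<phi> j \<noteq> {}"
  shows "winning \<phi> (play_strategy \<phi>)"
  unfolding winning_def
proof (intro conjI subsetI)
  show "strategy \<phi> (play_strategy \<phi>)"
    unfolding strategy_def play_strategy_def
  proof (intro ballI)
    fix x u assume x: "x \<in> evars \<phi>"
    then obtain k where k: "x = Suc k" by (cases x) (auto simp: evars_def vars_def)
    show "the (play \<phi> u x x) \<in> doms \<phi> x"
      using x ne unfolding k by (simp add: evars_def play_Suc_Ex choice_dom)
  qed
  fix v assume v: "v \<in> sce \<phi> (play_strategy \<phi>)"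
  have vt: "v \<in> tuples (vars \<phi>) (doms \<phi>)"
    and ve: "\<forall>x\<in>evars \<phi>. v x = Some (play_strategy \<phi> x (v |` prefix_avars \<phi> (x - 1)))"
    using v by (auto simp: sce_def)
  text \<open>A scenario of the play strategy is the play against its own
    universal moves.\<close>
  have play_prefix: "play \<phi> v k = v |` {1..k}" if "k \<le> nvars \<phi>" for k
    using that
  proof (induction k)
    case 0
    then show ?case by simp
  next
    case (Suc k)
    have jv: "Suc k \<in> vars \<phi>" using Suc by (simp add: vars_def)
    have IH: "play \<phi> v k = v |` {1..k}" using Suc by simp
    show ?case
    proof (cases "quant \<phi> (Suc k)")
      case QEx
      have "play \<phi> (v |` prefix_avars \<phi> k) (Suc k) = play \<phi> v (Suc k)"
      proof (rule play_cong)
        fix l assume l: "0 < l" "l \<le> Suc k" "quant \<phi> l = QAll"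
        then have "l \<le> k" using QEx by (cases "l = Suc k") auto
        then show "(v |` prefix_avars \<phi> k) l = v l"
          using l jv by (auto simp: prefix_avars_def avars_def prefix_vars_def vars_def)
      qed
      then have "v (Suc k) = Some (choice \<phi> (play \<phi> v k) (Suc k))"
        using ve jv QEx by (simp add: evars_def play_strategy_def play_Suc_Ex)
      then show ?thesis using IH by (simp only: play_Suc_Ex[OF QEx] restrict_map_Suc)
    next
      case QAll
      then obtain c where "v (Suc k) = Some c" using vt jv by (auto simp: tuples_def)
      then show ?thesis using IH by (simp only: play_Suc_All[OF QAll] option.sel restrict_map_Suc)
    qed
  qed
  have "dom v = {1..nvars \<phi>}" using vt by (simp add: tuples_def vars_def)
  then have "play \<phi> v (nvars \<phi>) = v"
    using play_prefix[OF order_refl] by (simp only: restrict_map_full)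
  moreover have "good \<phi> (nvars \<phi>) (play \<phi> v (nvars \<phi>))"
    by (rule play_good[OF qt]) (use vt in \<open>auto simp: tuples_def\<close>)
  ultimately show "v \<in> sol \<phi>" using vt by (simp add: sol_def good_def)
qed

lemma qtrue_winning_scenario:
  assumes qt: "qtrue \<phi>" and ne: "\<And>j. j \<in> vars \<phi> \<Longrightarrow> doms \<phi> j \<noteq> {}"
  obtains s v where "winning \<phi> s" "v \<in> sce \<phi> s"
proof -
  define w where "w = (\<lambda>j. Some (SOME b. b \<in> doms \<phi> j))"
  have win: "winning \<phi> (play_strategy \<phi>)" by (rule play_strategy_winning[OF qt ne])
  then have "scenario \<phi> (play_strategy \<phi>) w \<in> sce \<phi> (play_strategy \<phi>)"
    using ne by (intro scenario_in_sce) (auto simp: winning_def w_def some_in_eq)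
  with win show ?thesis using that by blast
qed

section \<open>Fixing a shallowly fixable value\<close>

lemma fixed_prefix_good:
  assumes iv: "i \<in> vars \<phi>" and iq: "quant \<phi> i = QEx" and sf: "s_fixable \<phi> i a"
    and v: "v \<in> out \<phi>"
  shows "good (\<phi>\<lparr>doms := (doms \<phi>)(i := {a})\<rparr>) (i - 1) (v |` {1..i - 1})"
proof -
  let ?\<psi> = "\<phi>\<lparr>doms := (doms \<phi>)(i := {a})\<rparr>"
  obtain t where t: "t \<in> out \<phi>" "v |` prefix_vars \<phi> (i - 1) = t |` prefix_vars \<phi> (i - 1)"
    "t i = Some a"
    using sf v unfolding s_fixable_def by blast
  have i: "Suc (i - 1) = i" "i - 1 < nvars \<phi>" using iv by (auto simp: vars_def)
  have "prefix_vars \<phi> (i - 1) = {1..i - 1}" using iv by (auto simp: prefix_vars_def vars_def)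
  then have prefix: "t |` {1..i} = (v |` {1..i - 1})(i \<mapsto> a)"
    using restrict_map_Suc[of t "i - 1" a] t(2,3) i(1) by simp
  obtain s where s: "winning \<phi> s" "t \<in> sce \<phi> s" using t(1) by (auto simp: out_def)
  have "good \<phi> i (t |` {1..i})" using winning_prefix_good[OF s] iv by (simp add: vars_def)
  then have "qeval \<phi> (nvars \<phi> - i) ((v |` {1..i - 1})(i \<mapsto> a))" unfolding good_def prefix .
  then have "qeval ?\<psi> (nvars \<phi> - i) ((v |` {1..i - 1})(i \<mapsto> a))"
    by (rule qeval_mono[rotated 5]) (use i in auto)
  then have "good ?\<psi> i ((v |` {1..i - 1})(i \<mapsto> a))" by (simp add: good_def)
  then show ?thesis using good_step[of "i - 1" ?\<psi>] i iq by simp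
qed

section \<open>Problems with an empty domain\<close>

lemma qtrue_first_empty_dom:
  assumes j0: "j0 \<in> vars \<phi>" and e: "doms \<phi> j0 = {}"
    and ne: "\<And>l. 1 \<le> l \<Longrightarrow> l < j0 \<Longrightarrow> doms \<phi> l \<noteq> {}"
  shows "qtrue \<phi> \<longleftrightarrow> quant \<phi> j0 = QAll"
proof -
  have j0n: "j0 \<le> nvars \<phi>" "0 < j0" using j0 by (auto simp: vars_def)
  have "good \<phi> k q \<longleftrightarrow> quant \<phi> j0 = QAll" if "k \<le> j0 - 1" for k q
    using that
  proof (induction k arbitrary: q rule: inc_induct)
    case base
    then show ?case using good_step[of "j0 - 1" \<phi> q] e j0n by (cases "quant \<phi> j0") auto
  next
    case (step k)
    have "doms \<phi> (Suc k) \<noteq> {}" using ne step.hyps by simp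
    then show ?case using good_step[of k \<phi> q] step j0n by auto
  qed
  from this[of 0 Map.empty] show ?thesis by (simp add: good_def qtrue_def)
qed

lemma first_empty_dom:
  assumes "\<exists>j\<in>vars \<phi>. doms \<phi> j = {}"
  obtains j0 where "j0 \<in> vars \<phi>" "doms \<phi> j0 = {}" "\<And>l. 1 \<le> l \<Longrightarrow> l < j0 \<Longrightarrow> doms \<phi> l \<noteq> {}"
proof -
  define j0 where "j0 = (LEAST j. j \<in> vars \<phi> \<and> doms \<phi> j = {})"
  have "j0 \<in> vars \<phi> \<and> doms \<phi> j0 = {}"
    using assms unfolding j0_def by (metis (mono_tags, lifting) LeastI)
  moreover have "doms \<phi> l \<noteq> {}" if "1 \<le> l" "l < j0" for l
    using that calculation not_less_Least[of l] by (fastforce simp: j0_def vars_def)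
  ultimately show ?thesis using that by blast
qed

text \<open>Fixing a value of a nonempty domain does not change the truth of a
  problem that has an empty domain: the first empty domain stays first.\<close>
lemma qtrue_fix_empty_dom:
  assumes empty: "\<exists>j\<in>vars \<phi>. doms \<phi> j = {}" and a: "a \<in> doms \<phi> i"
  shows "qtrue \<phi> \<longleftrightarrow> qtrue (\<phi>\<lparr>doms := (doms \<phi>)(i := {a})\<rparr>)"
proof -
  let ?\<psi> = "\<phi>\<lparr>doms := (doms \<phi>)(i := {a})\<rparr>"
  obtain j0 where j0: "j0 \<in> vars \<phi>" "doms \<phi> j0 = {}"
    and below: "\<And>l. 1 \<le> l \<Longrightarrow> l < j0 \<Longrightarrow> doms \<phi> l \<noteq> {}"
    using first_empty_dom[OF empty] by blast
  have "j0 \<noteq> i" using j0(2) a by auto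
  then have "qtrue ?\<psi> \<longleftrightarrow> quant \<phi> j0 = QAll"
    using qtrue_first_empty_dom[of j0 ?\<psi>] j0 below a by (simp add: vars_def)
  then show ?thesis using qtrue_first_empty_dom[OF j0 below] by simp
qed

lemma qtrue_fix_fixable:
  assumes qt: "qtrue \<phi>" and ne: "\<And>j. j \<in> vars \<phi> \<Longrightarrow> doms \<phi> j \<noteq> {}"
    and iv: "i \<in> vars \<phi>" and iq: "quant \<phi> i = QEx" and sf: "s_fixable \<phi> i a"
  shows "qtrue (\<phi>\<lparr>doms := (doms \<phi>)(i := {a})\<rparr>)"
proof -
  let ?\<psi> = "\<phi>\<lparr>doms := (doms \<phi>)(i := {a})\<rparr>"
  obtain s v where s: "winning \<phi> s" and v: "v \<in> sce \<phi> s"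
    using qtrue_winning_scenario[OF qt ne] by blast
  have "\<forall>v\<in>sce \<phi> s. good ?\<psi> 0 (v |` {1..0})"
    using fixed_prefix_good[OF iv iq sf] s
    by (intro sce_prefix_good_downward[OF s, of _ "i - 1"])
       (use iv in \<open>auto simp: out_def vars_def\<close>)
  then have "good ?\<psi> 0 (v |` {1..0})" using v by blast
  then show ?thesis by (simp add: good_def qtrue_def)
qed

theorem proposition7:
  fixes \<phi> :: "('d::finite) qcsp" and i :: nat and a :: 'd
  assumes "wf_qcsp \<phi>"
    and "i \<in> vars \<phi>"
    and "quant \<phi> i = QEx"
    and "a \<in> doms \<phi> i"
    and "s_fixable \<phi> i a"
  shows "qtrue \<phi> \<longleftrightarrow> qtrue (\<phi>\<lparr>doms := (doms \<phi>)(i := {a})\<rparr>)"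
proof (cases "\<exists>j\<in>vars \<phi>. doms \<phi> j = {}")
  case True
  then show ?thesis by (rule qtrue_fix_empty_dom[OF _ assms(4)])
next
  case False
  let ?\<psi> = "\<phi>\<lparr>doms := (doms \<phi>)(i := {a})\<rparr>"
  have "qtrue \<phi>" if "qtrue ?\<psi>"
  proof -
    have "qeval ?\<psi> (nvars \<phi>) Map.empty" using that by (simp add: qtrue_def)
    then show ?thesis
      unfolding qtrue_def by (rule qeval_mono[rotated 5]) (use assms(3,4) in auto)
  qed
  moreover have "qtrue ?\<psi>" if "qtrue \<phi>"
    using qtrue_fix_fixable[OF that _ assms(2,3,5)] False by blast
  ultimately show ?thesis by blast
qed

end
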